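(* Let $A$ be a circular $m\times n$ matrix and $\alpha$ a positive integer. Let $\Gamma$ be a circuit in $F(A)$ with $s$ row arcs and winding number $p$, such that $p$ does not divide $t(\Gamma,\alpha\mathbf{1})$ and $2\le p\le t(\Gamma,\alpha\mathbf{1})-1$. Let $r:=\alpha s-p\lfloor \alpha s/p\rfloor$. Then the $\Gamma$-inequality for $Q^*(A,\alpha\mathbf{1})$ (i.e. with $b=\alpha\mathbf{1}$) has the form $$r\sum_{j\notin\otimes(\Gamma)}x_j+(r+1)\sum_{j\in\otimes(\Gamma)}x_j\ge r\left\lceil\frac{\alpha s}{p}\right\rceil.$$ Moreover, if $\alpha=1$ and $\otimes(\Gamma)\neq\emptyset$, this inequality is the row family inequality induced by $F:=\{i\in[m]: a_i \text{ is a row arc of }\Gamma\}$.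
   Context: Notation: $[n]=\{1,\dots,n\}$ with addition mod $n$ (index $0$ identified with $n$); for $a,c\in[n]$ with $t\ge0$ minimal such that $a+t\equiv c\pmod n$, $[a,c)_n=\{a,\dots,a+t-1\}$ (mod $n$). An $m\times n$ $\{0,1\}$-matrix $A=(a_{ij})$ is circular if for each row $i$ there are $\ell_i\in[n]$ and an integer $2\le k_i\le n-1$ with row $i$ the incidence vector of $[\ell_i,\ell_i+k_i)_n$. $Q(A,b)=\{x\ge0:Ax\ge b\}$, $Q^*(A,b)=\operatorname{conv}(Q(A,b)\cap\mathbb{Z}^n)$. $D(A)$: node set $[n]$; forward row arcs $a_i=(\ell_i-1,\ell_i+k_i-1)$, forward short arcs $(j-1,j)$, reverse row arcs $\bar a_i=(\ell_i+k_i-1,\ell_i-1)$, reverse short arcs $(j,j-1)$, with lengths $k_i,1,-k_i,-1$. $F(A)$ is $D(A)$ with all reverse row arcs removed. A circuit is a simple directed circuit; winding number $p(\Gamma)$: $p(\Gamma)n=$ sum of arc lengths. A forward row arc $a_i$ jumps over $j$ iff $j\in[\ell_i,\ell_i+k_i)_n$; $(j-1,j)$ jumps over $j$ only; a reverse arc jumps over $j$ iff its antiparallel forward arc does; $p^-(\Gamma,j)$ = number of reverse arcs of $\Gamma$ jumping over $j$. $\otimes(\Gamma)=\{j\in[n]:(j,j-1)\in E(\Gamma)\}$. For a circuit $\Gamma$ and $b\in\mathbb{Z}_+^m$: $t(\Gamma,b)=\sum_{i:a_i\in E(\Gamma)}b_i-\sum_{i:\bar a_i\in E(\Gamma)}b_i$;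 for $p(\Gamma)\ne0$, $\beta=\lfloor t(\Gamma,b)/p(\Gamma)\rfloor$, $\rho=t(\Gamma,b)-\beta p(\Gamma)$, and the $\Gamma$-inequality is $\sum_{j}[p^-(\Gamma,j)+\rho]x_j\ge\rho(\beta+1)+\sum_{i:\bar a_i\in E(\Gamma)}b_i$. Row family inequalities: for $F\subseteq[m]$ with $s=|F|\ge2$ and integer $1\le p\le s-1$ not dividing $s$, let $r=s-p\lfloor s/p\rfloor$, $I(F,p)=\{j:\sum_{i\in F}a_{ij}\le p\}$, $O(F,p)=\{j:\sum_{i\in F}a_{ij}=p+1\}$; the rfi induced by $(F,p)$ is $(r+1)\sum_{j\in O(F,p)}x_j+r\sum_{j\in I(F,p)}x_j\ge r\lceil s/p\rceil$. The rfi induced by $F$ is the one induced by $(F,p^* )$ with $p^*=\max_j\sum_{i\in F}a_{ij}-1$. *)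

theory Defs
  imports Complex_Main
begin

text \<open>Nodes/columns are [n] = {1..n}, rows are [m] = {1..m}. Indices are reduced
 circularly modulo n with 0 identified with n.\<close>

definition cmod :: "nat \<Rightarrow> nat \<Rightarrow> nat" where
  "cmod n x = (x + n - 1) mod n + 1"

definition cint :: "nat \<Rightarrow> nat \<Rightarrow> nat \<Rightarrow> nat set" where
  "cint n a kk = {cmod n (a + t) | t. t < kk}"

text \<open>A circular m x n matrix A is given by the data l_i, k_i of its rows:
 row i is the incidence vector of [l_i, l_i + k_i)_n.\<close>
definition circular :: "nat \<Rightarrow> nat \<Rightarrow> (nat \<Rightarrow> nat) \<Rightarrow> (nat \<Rightarrow> nat) \<Rightarrow> bool" where
  "circular n m l k \<longleftrightarrow> (\<forall>i\<in>{1..m}. l i \<in> {1..n} \<and> 2 \<le> k i \<and> k i \<le> n - 1)"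

definition circ_entry :: "nat \<Rightarrow> (nat \<Rightarrow> nat) \<Rightarrow> (nat \<Rightarrow> nat) \<Rightarrow> nat \<Rightarrow> nat \<Rightarrow> int" where
  "circ_entry n l k i j = (if j \<in> cint n (l i) (k i) then 1 else 0)"

text \<open>Arcs of D(A): forward row arc a_i, forward short arc (j-1,j),
 reverse row arc, reverse short arc (j,j-1).\<close>
datatype arc = RowF nat | ShortF nat | RowR nat | ShortR nat

fun arc_tail :: "nat \<Rightarrow> (nat \<Rightarrow> nat) \<Rightarrow> (nat \<Rightarrow> nat) \<Rightarrow> arc \<Rightarrow> nat" where
  "arc_tail n l k (RowF i) = cmod n (l i - 1)"
| "arc_tail n l k (ShortF j) = cmod n (j - 1)"
| "arc_tail n l k (RowR i) = cmod n (l i + k i - 1)"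
| "arc_tail n l k (ShortR j) = j"

fun arc_head :: "nat \<Rightarrow> (nat \<Rightarrow> nat) \<Rightarrow> (nat \<Rightarrow> nat) \<Rightarrow> arc \<Rightarrow> nat" where
  "arc_head n l k (RowF i) = cmod n (l i + k i - 1)"
| "arc_head n l k (ShortF j) = j"
| "arc_head n l k (RowR i) = cmod n (l i - 1)"
| "arc_head n l k (ShortR j) = cmod n (j - 1)"

fun arc_len :: "(nat \<Rightarrow> nat) \<Rightarrow> arc \<Rightarrow> int" where
  "arc_len k (RowF i) = int (k i)"
| "arc_len k (ShortF j) = 1"
| "arc_len k (RowR i) = - int (k i)"
| "arc_len k (ShortR j) = -1"

fun is_reverse :: "arc \<Rightarrow> bool" where
  "is_reverse (RowR i) = True"
| "is_reverse (ShortR j) = True"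
| "is_reverse _ = False"

fun jumps :: "nat \<Rightarrow> (nat \<Rightarrow> nat) \<Rightarrow> (nat \<Rightarrow> nat) \<Rightarrow> arc \<Rightarrow> nat \<Rightarrow> bool" where
  "jumps n l k (RowF i) j = (j \<in> cint n (l i) (k i))"
| "jumps n l k (ShortF j') j = (j = j')"
| "jumps n l k (RowR i) j = (j \<in> cint n (l i) (k i))"
| "jumps n l k (ShortR j') j = (j = j')"

definition arcs_D :: "nat \<Rightarrow> nat \<Rightarrow> arc set" where
  "arcs_D n m = RowF ` {1..m} \<union> ShortF ` {1..n} \<union> RowR ` {1..m} \<union> ShortR ` {1..n}"

definition arcs_F :: "nat \<Rightarrow> nat \<Rightarrow> arc set" where
  "arcs_F n m = RowF ` {1..m} \<union> ShortF ` {1..n} \<union> ShortR ` {1..n}"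

definition is_circuit :: "nat \<Rightarrow> (nat \<Rightarrow> nat) \<Rightarrow> (nat \<Rightarrow> nat) \<Rightarrow> arc set \<Rightarrow> arc list \<Rightarrow> bool" where
  "is_circuit n l k E cs \<longleftrightarrow> cs \<noteq> [] \<and> set cs \<subseteq> E \<and>
     distinct (map (arc_tail n l k) cs) \<and>
     (\<forall>q < length cs. arc_head n l k (cs ! q) = arc_tail n l k (cs ! ((q + 1) mod length cs)))"

definition winding :: "nat \<Rightarrow> (nat \<Rightarrow> nat) \<Rightarrow> arc list \<Rightarrow> int" where
  "winding n k cs = sum_list (map (arc_len k) cs) div int n"

definition pminus :: "nat \<Rightarrow> (nat \<Rightarrow> nat) \<Rightarrow> (nat \<Rightarrow> nat) \<Rightarrow> arc list \<Rightarrow> nat \<Rightarrow> nat" where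
  "pminus n l k cs j = card {e \<in> set cs. is_reverse e \<and> jumps n l k e j}"

definition otimes :: "nat \<Rightarrow> arc list \<Rightarrow> nat set" where
  "otimes n cs = {j \<in> {1..n}. ShortR j \<in> set cs}"

definition tval :: "nat \<Rightarrow> arc list \<Rightarrow> (nat \<Rightarrow> int) \<Rightarrow> int" where
  "tval m cs b = (\<Sum>i \<in> {i \<in> {1..m}. RowF i \<in> set cs}. b i)
               - (\<Sum>i \<in> {i \<in> {1..m}. RowR i \<in> set cs}. b i)"

text \<open>The Gamma-inequality  sum_j c_j x_j \<ge> rhs, as the pair (c, rhs)
 (c is meaningful on [n]).\<close>
definition gamma_ineq :: "nat \<Rightarrow> nat \<Rightarrow> (nat \<Rightarrow> nat) \<Rightarrow> (nat \<Rightarrow> nat) \<Rightarrow> arc list \<Rightarrow> (nat \<Rightarrow> int)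
    \<Rightarrow> (nat \<Rightarrow> int) \<times> int" where
  "gamma_ineq n m l k cs b =
     (let p = winding n k cs; t = tval m cs b;
          \<beta> = \<lfloor>real_of_int t / real_of_int p\<rfloor>; \<rho> = t - \<beta> * p
      in (\<lambda>j. int (pminus n l k cs j) + \<rho>,
          \<rho> * (\<beta> + 1) + (\<Sum>i \<in> {i \<in> {1..m}. RowR i \<in> set cs}. b i)))"

definition rfi_valid :: "nat set \<Rightarrow> int \<Rightarrow> bool" where
  "rfi_valid F p \<longleftrightarrow> card F \<ge> 2 \<and> 1 \<le> p \<and> p \<le> int (card F) - 1 \<and> \<not> p dvd int (card F)"

definition rfi :: "(nat \<Rightarrow> nat \<Rightarrow> int) \<Rightarrow> nat set \<Rightarrow> int \<Rightarrow> (nat \<Rightarrow> int) \<times> int" where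
  "rfi a F p =
     (let s = int (card F); r = s - p * \<lfloor>real_of_int s / real_of_int p\<rfloor>
      in (\<lambda>j. if (\<Sum>i\<in>F. a i j) \<le> p then r
              else if (\<Sum>i\<in>F. a i j) = p + 1 then r + 1 else 0,
          r * \<lceil>real_of_int s / real_of_int p\<rceil>))"

definition pstar :: "nat \<Rightarrow> (nat \<Rightarrow> nat \<Rightarrow> int) \<Rightarrow> nat set \<Rightarrow> int" where
  "pstar n a F = Max ((\<lambda>j. \<Sum>i\<in>F. a i j) ` {1..n}) - 1"

end

theory Submission
  imports Defs
begin

text \<open>Fix a column j and count the arcs of a circuit that jump over j, forward arcs with +1 and
reverse arcs with -1. This count is the same for j and j + 1, since every node is the tail of as
many arcs of the circuit as it is the head of, and its sum over all n columns is the total arc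
length; hence it equals the winding number p for every j. In F(A) the only reverse arcs are short,
so the row arcs of the circuit cover column j exactly p + [(j,j-1)] - [(j-1,j)] times, and the
two short arcs at j occur together only in the circuit consisting of just these two. So the
covering numbers are at most p + 1, with equality exactly on otimes(Gamma), which gives p* = p.
Together with p^-(Gamma,j) = [j in otimes(Gamma)] and t(Gamma, alpha 1) = alpha s this puts both
the Gamma-inequality and the row family inequality into the stated form.\<close>

lemma cmod_in_range: "n > 0 \<Longrightarrow> cmod n y \<in> {1..n}"
  unfolding cmod_def by (simp add: Suc_leI)

lemma cmod_mod: "n > 0 \<Longrightarrow> cmod n y mod n = y mod n"
proof -
  assume n: "n > 0"
  have "cmod n y mod n = Suc ((y + n - 1) mod n) mod n" unfolding cmod_def by simp
  also have "\<dots> = Suc (y + n - 1) mod n" by (rule mod_Suc_eq)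
  also have "Suc (y + n - 1) = y + n" using n by simp
  finally show ?thesis by simp
qed

lemma range_eq_of_mod:
  assumes "(x::nat) \<in> {1..n}"
  shows "x = (if x mod n = 0 then n else x mod n)"
  using assms by (cases "x < n") simp_all

lemma cmod_eq_iff:
  assumes "x \<in> {1..n}"
  shows "cmod n y = x \<longleftrightarrow> x mod n = y mod n"
proof
  assume "cmod n y = x"
  then show "x mod n = y mod n" using assms cmod_mod by auto
next
  assume xy: "x mod n = y mod n"
  have n: "n > 0" using assms by simp
  have "cmod n y mod n = x mod n" using cmod_mod[OF n] xy by simp
  then show "cmod n y = x"
    using range_eq_of_mod[OF assms] range_eq_of_mod[OF cmod_in_range[OF n, of y]] by metis
qed

lemma nat_mod_eq_iff_int_diff:
  "(x::nat) mod n = y mod n \<longleftrightarrow> (int x - int a) mod int n = (int y - int a) mod int n"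
proof -
  have "x mod n = y mod n \<longleftrightarrow> int x mod int n = int y mod int n"
    by (simp flip: of_nat_mod)
  also have "\<dots> \<longleftrightarrow> (int x - int a) mod int n = (int y - int a) mod int n"
    unfolding mod_eq_dvd_iff by (simp add: algebra_simps)
  finally show ?thesis .
qed

lemma cmod_eq_iff_int:
  "x \<in> {1..n} \<Longrightarrow> cmod n y = x \<longleftrightarrow> (int x - int a) mod int n = (int y - int a) mod int n"
  using cmod_eq_iff nat_mod_eq_iff_int_diff by blast

lemma cmod_of_range: "x \<in> {1..n} \<Longrightarrow> cmod n x = x"
  using cmod_eq_iff by blast

lemma cmod_Suc_eq_iff:
  assumes j: "j \<in> {1..n}" and j': "j' \<in> {1..n}"
  shows "cmod n (j + 1) = j' \<longleftrightarrow> cmod n (j' - 1) = j"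
proof -
  have "cmod n (j + 1) = j' \<longleftrightarrow> int n dvd int j' - int (j + 1)"
    using cmod_eq_iff_int[OF j', of "j + 1" 0] by (simp add: mod_eq_dvd_iff)
  also have "\<dots> \<longleftrightarrow> int n dvd int j - int (j' - 1)"
    using j' by (simp add: of_nat_diff dvd_diff_commute algebra_simps)
  also have "\<dots> \<longleftrightarrow> cmod n (j' - 1) = j"
    using cmod_eq_iff_int[OF j, of "j' - 1" 0] by (simp add: mod_eq_dvd_iff)
  finally show ?thesis .
qed

lemma mem_cint_iff:
  assumes "kk \<le> n" "x \<in> {1..n}"
  shows "x \<in> cint n a kk \<longleftrightarrow> (int x - int a) mod int n < int kk"
proof
  assume "x \<in> cint n a kk"
  then obtain t where t: "t < kk" "cmod n (a + t) = x" unfolding cint_def by auto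
  then have "(int x - int a) mod int n = int t mod int n"
    using cmod_eq_iff_int[OF assms(2), of "a + t" a] t(2) by simp
  also have "\<dots> = int t" using t assms(1) by simp
  finally show "(int x - int a) mod int n < int kk" using t by simp
next
  assume lt: "(int x - int a) mod int n < int kk"
  define t where "t = nat ((int x - int a) mod int n)"
  have t: "int t = (int x - int a) mod int n" unfolding t_def using assms by simp
  then have "cmod n (a + t) = x" using cmod_eq_iff_int[OF assms(2), of "a + t" a] by simp
  moreover have "t < kk" using lt t by linarith
  ultimately show "x \<in> cint n a kk" unfolding cint_def by auto
qed

lemma cint_subset: "n > 0 \<Longrightarrow> cint n a kk \<subseteq> {1..n}"
  unfolding cint_def using cmod_in_range by auto

lemma card_cint:
  assumes "kk \<le> n"
  shows "card (cint n a kk) = kk"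
proof -
  have "inj_on (\<lambda>t. cmod n (a + t)) {..<kk}"
  proof (rule inj_onI)
    fix t t' assume "t \<in> {..<kk}" "t' \<in> {..<kk}" and eq: "cmod n (a + t) = cmod n (a + t')"
    then have "t < n" "t' < n" using assms by auto
    then have "(a + t) mod n = (a + t') mod n" using eq cmod_mod[of n] by (metis gr_zeroI not_less0)
    then have "int t mod int n = int t' mod int n" using nat_mod_eq_iff_int_diff[of _ n _ a] by simp
    with \<open>t < n\<close> \<open>t' < n\<close> show "t = t'" by simp
  qed
  moreover have "cint n a kk = (\<lambda>t. cmod n (a + t)) ` {..<kk}" unfolding cint_def by auto
  ultimately show ?thesis by (simp add: card_image)
qed

lemma cint_indicator_step:
  assumes a: "1 \<le> a" and kk: "1 \<le> kk" "kk < n" and j: "j \<in> {1..n}"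
  shows "of_bool (cmod n (j + 1) \<in> cint n a kk) - of_bool (j \<in> cint n a kk)
       = of_bool (cmod n (a - 1) = j) - (of_bool (cmod n (a + kk - 1) = j) :: int)"
proof -
  define d where "d = (int j - int a) mod int n"
  have n: "n > 0" using j by simp
  have d: "0 \<le> d" "d < int n" unfolding d_def using n by auto
  have j1: "cmod n (j + 1) \<in> {1..n}" using cmod_in_range[OF n] .
  have "(int (cmod n (j + 1)) - int a) mod int n = (int (j + 1) - int a) mod int n"
    using cmod_eq_iff_int[OF j1, of "j + 1" a] by simp
  also have "\<dots> = (d + 1) mod int n" unfolding d_def by (simp add: mod_simps algebra_simps)
  finally have "cmod n (j + 1) \<in> cint n a kk \<longleftrightarrow> (d + 1) mod int n < int kk"
    using mem_cint_iff[OF _ j1, of kk a] kk by simp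
  moreover have "j \<in> cint n a kk \<longleftrightarrow> d < int kk"
    using mem_cint_iff[OF _ j, of kk a] kk unfolding d_def by simp
  moreover have "cmod n (a - 1) = j \<longleftrightarrow> d = int n - 1"
    using cmod_eq_iff_int[OF j, of "a - 1" a] a n unfolding d_def
    by (simp add: of_nat_diff zmod_minus1)
  moreover have "cmod n (a + kk - 1) = j \<longleftrightarrow> d = int kk - 1"
    using cmod_eq_iff_int[OF j, of "a + kk - 1" a] a kk unfolding d_def by (simp add: of_nat_diff)
  moreover have "(d + 1) mod int n = (if d = int n - 1 then 0 else d + 1)"
    using d by auto
  ultimately show ?thesis using d kk by auto
qed

lemma circular_row_bounds:
  assumes "circular n m l k" "i \<in> {1..m}"
  shows "l i \<in> {1..n}" "2 \<le> k i" "k i < n"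
  using assms unfolding circular_def by fastforce+

definition jump_weight :: "nat \<Rightarrow> (nat \<Rightarrow> nat) \<Rightarrow> (nat \<Rightarrow> nat) \<Rightarrow> arc \<Rightarrow> nat \<Rightarrow> int" where
  "jump_weight n l k e j = (if jumps n l k e j then if is_reverse e then -1 else 1 else 0)"

lemma jump_weight_RowF: "jump_weight n l k (RowF i) j = of_bool (j \<in> cint n (l i) (k i))"
  unfolding jump_weight_def by simp

lemma jump_weight_RowR: "jump_weight n l k (RowR i) j = - of_bool (j \<in> cint n (l i) (k i))"
  unfolding jump_weight_def by simp

lemma jump_weight_step:
  assumes circ: "circular n m l k" and e: "e \<in> arcs_D n m" and j: "j \<in> {1..n}"
  shows "jump_weight n l k e (cmod n (j + 1)) - jump_weight n l k e j
       = of_bool (arc_tail n l k e = j) - of_bool (arc_head n l k e = j)"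
  using e unfolding arcs_D_def
proof (elim UnE imageE)
  fix i assume i: "i \<in> {1..m}"
  then have "1 \<le> l i" "1 \<le> k i" "k i < n" using circular_row_bounds[OF circ] by fastforce+
  note step = cint_indicator_step[OF this j]
  {
    assume "e = RowF i"
    then show ?thesis using step by (simp only: jump_weight_RowF arc_tail.simps arc_head.simps)
  next
    assume "e = RowR i"
    then show ?thesis using step by (simp only: jump_weight_RowR arc_tail.simps arc_head.simps)
  }
next
  fix j' assume j': "j' \<in> {1..n}"
  note shift = cmod_Suc_eq_iff[OF j j']
  {
    assume "e = ShortF j'"
    then show ?thesis using shift unfolding jump_weight_def by auto
  next
    assume "e = ShortR j'"
    then show ?thesis using shift unfolding jump_weight_def by auto
  }
qed

lemma sum_jump_weight:
  assumes circ: "circular n m l k" and e: "e \<in> arcs_D n m"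
  shows "(\<Sum>j\<in>{1..n}. jump_weight n l k e j) = arc_len k e"
  using e unfolding arcs_D_def
proof (elim UnE imageE)
  fix i assume "i \<in> {1..m}"
  then have n: "n > 0" and "k i \<le> n" using circular_row_bounds[OF circ] by fastforce+
  then have "(\<Sum>j\<in>{1..n}. of_bool (j \<in> cint n (l i) (k i))) = int (k i)"
    using cint_subset[OF n] card_cint by (simp add: Int_absorb1 Collect_mem_eq)
  note row_sum = this
  {
    assume "e = RowF i"
    then show ?thesis using row_sum by (simp only: jump_weight_RowF arc_len.simps)
  next
    assume "e = RowR i"
    then show ?thesis using row_sum by (simp only: jump_weight_RowR arc_len.simps sum_negf)
  }
qed (auto simp: jump_weight_def)

definition crossing :: "nat \<Rightarrow> (nat \<Rightarrow> nat) \<Rightarrow> (nat \<Rightarrow> nat) \<Rightarrow> arc list \<Rightarrow> nat \<Rightarrow> int" where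
  "crossing n l k cs j = (\<Sum>e\<leftarrow>cs. jump_weight n l k e j)"

lemma sum_list_rotate1: "sum_list (rotate1 xs) = sum_list (xs :: 'a::comm_monoid_add list)"
  by (cases xs) (simp_all add: add.commute)

lemma circuit_distinct: "is_circuit n l k E cs \<Longrightarrow> distinct cs"
  unfolding is_circuit_def using distinct_map by blast

lemma circuit_heads_eq_rotated_tails:
  assumes "is_circuit n l k E cs"
  shows "map (arc_head n l k) cs = map (arc_tail n l k) (rotate1 cs)"
proof (rule nth_equalityI)
  fix q assume "q < length (map (arc_head n l k) cs)"
  then show "map (arc_head n l k) cs ! q = map (arc_tail n l k) (rotate1 cs) ! q"
    using assms nth_rotate1[of q cs] unfolding is_circuit_def by simp
qed simp

lemma crossing_step:
  assumes circ: "circular n m l k" and c: "is_circuit n l k E cs" and E: "E \<subseteq> arcs_D n m"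
    and j: "j \<in> {1..n}"
  shows "crossing n l k cs (cmod n (j + 1)) = crossing n l k cs j"
proof -
  let ?count = "\<lambda>xs. \<Sum>x\<leftarrow>xs. of_bool (x = j) :: int"
  have arcs: "set cs \<subseteq> arcs_D n m" using c E unfolding is_circuit_def by blast
  have "crossing n l k cs (cmod n (j + 1)) - crossing n l k cs j
      = (\<Sum>e\<leftarrow>cs. of_bool (arc_tail n l k e = j) - of_bool (arc_head n l k e = j))"
    unfolding crossing_def sum_list_subtractf[symmetric]
    by (intro arg_cong[where f = sum_list] map_cong refl)
      (use arcs jump_weight_step[OF circ _ j] in blast)
  also have "\<dots> = ?count (map (arc_tail n l k) cs) - ?count (map (arc_head n l k) cs)"
    by (simp add: sum_list_subtractf comp_def)
  also have "?count (map (arc_head n l k) cs) = ?count (map (arc_tail n l k) cs)"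
    unfolding circuit_heads_eq_rotated_tails[OF c] rotate1_map[symmetric] sum_list_rotate1 ..
  finally show ?thesis by simp
qed

lemma crossing_eq_crossing_1:
  assumes circ: "circular n m l k" and c: "is_circuit n l k E cs" and E: "E \<subseteq> arcs_D n m"
  shows "j \<in> {1..n} \<Longrightarrow> crossing n l k cs j = crossing n l k cs 1"
proof (induction j)
  case (Suc j)
  show ?case
  proof (cases "j = 0")
    case False
    then have j: "j \<in> {1..n}" using Suc.prems by auto
    have "cmod n (j + 1) = Suc j" using cmod_of_range Suc.prems by simp
    then show ?thesis using crossing_step[OF circ c E j] Suc.IH j by simp
  qed simp
qed simp

lemma winding_eq_crossing:
  assumes circ: "circular n m l k" and c: "is_circuit n l k E cs" and E: "E \<subseteq> arcs_D n m"
    and j: "j \<in> {1..n}"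
  shows "winding n k cs = crossing n l k cs j"
proof -
  have arcs: "set cs \<subseteq> arcs_D n m" using c E unfolding is_circuit_def by blast
  have "(\<Sum>e\<leftarrow>cs. arc_len k e) = (\<Sum>e\<in>set cs. arc_len k e)"
    by (rule sum_list_distinct_conv_sum_set[OF circuit_distinct[OF c]])
  also have "\<dots> = (\<Sum>e\<in>set cs. \<Sum>j\<in>{1..n}. jump_weight n l k e j)"
    using sum_jump_weight[OF circ] arcs by (intro sum.cong[OF refl]) (simp add: subset_iff)
  also have "\<dots> = (\<Sum>j\<in>{1..n}. crossing n l k cs j)"
    unfolding crossing_def sum_list_distinct_conv_sum_set[OF circuit_distinct[OF c]]
    by (rule sum.swap)
  also have "\<dots> = (\<Sum>j\<in>{1..n}. crossing n l k cs 1)"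
    using crossing_eq_crossing_1[OF circ c E] by (rule sum.cong[OF refl])
  finally have "sum_list (map (arc_len k) cs) = int n * crossing n l k cs 1" by simp
  moreover have "n > 0" using j by simp
  ultimately show ?thesis
    unfolding winding_def using crossing_eq_crossing_1[OF circ c E j] by simp
qed

lemma circuit_next_index:
  assumes c: "is_circuit n l k E cs" and q: "q < length cs" "q' < length cs"
    and head_tail: "arc_head n l k (cs ! q) = arc_tail n l k (cs ! q')"
  shows "q' = Suc q mod length cs"
proof -
  let ?tails = "map (arc_tail n l k) cs"
  have "?tails ! (Suc q mod length cs) = ?tails ! q'"
    using c q head_tail unfolding is_circuit_def by simp
  moreover have "distinct ?tails" and "Suc q mod length cs < length ?tails"
    using c q unfolding is_circuit_def by auto
  ultimately show ?thesis using nth_eq_iff_index_eq q(2) by fastforce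
qed

lemma circuit_ShortF_ShortR:
  assumes c: "is_circuit n l k E cs" and "ShortF j \<in> set cs" "ShortR j \<in> set cs"
  shows "set cs = {ShortF j, ShortR j}"
proof -
  let ?L = "length cs"
  obtain q q' where q: "q < ?L" "cs ! q = ShortF j" and q': "q' < ?L" "cs ! q' = ShortR j"
    using assms(2,3) in_set_conv_nth by metis
  have next_q: "q' = Suc q mod ?L" and next_q': "q = Suc q' mod ?L"
    using circuit_next_index[OF c q(1) q'(1)] circuit_next_index[OF c q'(1) q(1)] q q' by simp_all
  have "(q + 2) mod ?L = Suc (Suc q mod ?L) mod ?L" by (simp add: mod_Suc_eq)
  also have "\<dots> = q mod ?L" using next_q next_q' q by simp
  finally have "?L dvd 2" by (simp add: mod_eq_dvd_iff_nat)
  moreover have "q \<noteq> q'" using q q' by auto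
  moreover have "?L \<le> 2" using \<open>?L dvd 2\<close> by (rule dvd_imp_le) simp
  ultimately have "?L = 2" using q(1) q'(1) by arith
  then have q01: "{q, q'} = {0, 1}" using q q' \<open>q \<noteq> q'\<close> by auto
  have "set cs = (\<lambda>i. cs ! i) ` {0, 1}"
    using \<open>?L = 2\<close> by (auto simp: set_conv_nth less_2_cases_iff)
  then have "set cs = {cs ! q, cs ! q'}" unfolding q01[symmetric] by simp
  then show ?thesis using q(2) q'(2) by simp
qed

lemma crossing_F_circuit:
  assumes c: "is_circuit n l k E cs" and E: "E \<subseteq> arcs_F n m"
  shows "crossing n l k cs j = (\<Sum>i\<in>{i \<in> {1..m}. RowF i \<in> set cs}. circ_entry n l k i j)
           + of_bool (ShortF j \<in> set cs) - of_bool (ShortR j \<in> set cs)"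
proof -
  let ?S = "set cs" and ?R = "{i \<in> {1..m}. RowF i \<in> set cs}"
  let ?row = "\<lambda>e. case e of RowF i \<Rightarrow> circ_entry n l k i j | _ \<Rightarrow> 0"
  have arcs: "?S \<subseteq> arcs_F n m" using c E unfolding is_circuit_def by blast
  have "crossing n l k cs j = (\<Sum>e\<in>?S. jump_weight n l k e j)"
    unfolding crossing_def by (rule sum_list_distinct_conv_sum_set[OF circuit_distinct[OF c]])
  also have "\<dots> = (\<Sum>e\<in>?S. ?row e + of_bool (e = ShortF j) - of_bool (e = ShortR j))"
  proof (rule sum.cong[OF refl])
    fix e assume "e \<in> ?S"
    then have "e \<in> arcs_F n m" using arcs by blast
    then show "jump_weight n l k e j = ?row e + of_bool (e = ShortF j) - of_bool (e = ShortR j)"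
      unfolding arcs_F_def jump_weight_def circ_entry_def by auto
  qed
  also have "\<dots> = (\<Sum>e\<in>?S. ?row e) + of_bool (ShortF j \<in> ?S) - of_bool (ShortR j \<in> ?S)"
    by (simp add: sum.distrib sum_subtractf of_bool_def sum.delta')
  also have "(\<Sum>e\<in>?S. ?row e) = (\<Sum>e\<in>RowF ` ?R. ?row e)"
  proof (rule sum.mono_neutral_right)
    show "\<forall>e\<in>?S - RowF ` ?R. ?row e = 0"
      using arcs unfolding arcs_F_def by auto
  qed auto
  also have "\<dots> = (\<Sum>i\<in>?R. circ_entry n l k i j)"
    by (simp add: sum.reindex inj_on_def)
  finally show ?thesis .
qed

lemma pminus_F_circuit:
  assumes "set cs \<subseteq> arcs_F n m"
  shows "pminus n l k cs j = of_bool (ShortR j \<in> set cs)"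
proof -
  have "{e \<in> set cs. is_reverse e \<and> jumps n l k e j}
      = (if ShortR j \<in> set cs then {ShortR j} else {})"
    using assms unfolding arcs_F_def by auto
  then show ?thesis unfolding pminus_def by simp
qed

lemma tval_uniform_F:
  assumes "set cs \<subseteq> arcs_F n m"
  shows "tval m cs (\<lambda>_. c) = c * int (card {i \<in> {1..m}. RowF i \<in> set cs})"
proof -
  have "{i \<in> {1..m}. RowR i \<in> set cs} = {}" using assms unfolding arcs_F_def by auto
  then show ?thesis unfolding tval_def by simp
qed

lemma ceiling_divide_not_dvd:
  fixes t p :: int
  assumes "p \<noteq> 0" "\<not> p dvd t"
  shows "\<lceil>real_of_int t / real_of_int p\<rceil> = \<lfloor>real_of_int t / real_of_int p\<rfloor> + 1"
proof -
  have "real_of_int t / real_of_int p \<noteq> of_int (t div p)"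
  proof
    assume "real_of_int t / real_of_int p = of_int (t div p)"
    with assms(1) have "t = p * (t div p)" by (simp add: field_simps flip: of_int_mult)
    then show False using assms(2) by (metis dvd_triv_left)
  qed
  then show ?thesis by (simp add: ceiling_altdef floor_divide_of_int_eq)
qed

lemma gamma_ineq_uniform_F:
  fixes c s p :: int
  assumes arcs: "set cs \<subseteq> arcs_F n m"
    and p: "p = winding n k cs" "p \<noteq> 0" and s: "s = int (card {i \<in> {1..m}. RowF i \<in> set cs})"
    and ndvd: "\<not> p dvd c * s"
  defines "r \<equiv> c * s - p * \<lfloor>real_of_int (c * s) / real_of_int p\<rfloor>"
  shows "gamma_ineq n m l k cs (\<lambda>_. c)
       = (\<lambda>j. r + of_bool (ShortR j \<in> set cs), r * \<lceil>real_of_int (c * s) / real_of_int p\<rceil>)"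
proof -
  have "{i \<in> {1..m}. RowR i \<in> set cs} = {}" using arcs unfolding arcs_F_def by auto
  then show ?thesis
    unfolding gamma_ineq_def Let_def r_def tval_uniform_F[OF arcs] p(1)[symmetric] s[symmetric]
    using pminus_F_circuit[OF arcs] ceiling_divide_not_dvd[OF p(2) ndvd]
    by (auto simp: algebra_simps)
qed

lemma row_cover_F_circuit:
  assumes circ: "circular n m l k" and c: "is_circuit n l k E cs" and E: "E \<subseteq> arcs_F n m"
    and row: "RowF i \<in> set cs" and j: "j \<in> {1..n}"
  shows "(\<Sum>i\<in>{i \<in> {1..m}. RowF i \<in> set cs}. circ_entry n l k i j)
       = (if ShortR j \<in> set cs then winding n k cs + 1
          else if ShortF j \<in> set cs then winding n k cs - 1 else winding n k cs)"
proof -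
  have "E \<subseteq> arcs_D n m" using E unfolding arcs_F_def arcs_D_def by blast
  then have "winding n k cs = crossing n l k cs j" using winding_eq_crossing[OF circ c _ j] by blast
  moreover have "\<not> (ShortF j \<in> set cs \<and> ShortR j \<in> set cs)"
    using circuit_ShortF_ShortR[OF c] row by blast
  ultimately show ?thesis using crossing_F_circuit[OF c E, of j] by auto
qed

lemma pstar_F_circuit:
  assumes circ: "circular n m l k" and c: "is_circuit n l k E cs" and E: "E \<subseteq> arcs_F n m"
    and row: "RowF i \<in> set cs" and reverse_short: "otimes n cs \<noteq> {}"
  shows "pstar n (circ_entry n l k) {i \<in> {1..m}. RowF i \<in> set cs} = winding n k cs"
proof -
  let ?cover = "\<lambda>j. \<Sum>i\<in>{i \<in> {1..m}. RowF i \<in> set cs}. circ_entry n l k i j"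
  note cover = row_cover_F_circuit[OF circ c E row]
  obtain j0 where j0: "j0 \<in> {1..n}" "ShortR j0 \<in> set cs"
    using reverse_short unfolding otimes_def by blast
  have "Max (?cover ` {1..n}) = winding n k cs + 1"
  proof (rule Max_eqI)
    fix y assume "y \<in> ?cover ` {1..n}"
    then obtain j where "j \<in> {1..n}" "y = ?cover j" by blast
    then show "y \<le> winding n k cs + 1" using cover[of j] by simp
  next
    show "winding n k cs + 1 \<in> ?cover ` {1..n}"
      using j0(1) by (rule rev_image_eqI) (use cover[OF j0(1)] j0(2) in simp)
  qed simp
  then show ?thesis unfolding pstar_def by simp
qed

lemma rfi_F_circuit:
  assumes circ: "circular n m l k" and c: "is_circuit n l k E cs" and E: "E \<subseteq> arcs_F n m"
    and row: "RowF i \<in> set cs" and j: "j \<in> {1..n}"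
  defines "F \<equiv> {i \<in> {1..m}. RowF i \<in> set cs}" and "p \<equiv> winding n k cs"
  defines "r \<equiv> int (card F) - p * \<lfloor>real_of_int (int (card F)) / real_of_int p\<rfloor>"
  shows "fst (rfi (circ_entry n l k) F p) j = r + of_bool (ShortR j \<in> set cs)"
proof -
  have "(\<Sum>i\<in>F. circ_entry n l k i j)
      = (if ShortR j \<in> set cs then p + 1 else if ShortF j \<in> set cs then p - 1 else p)"
    using row_cover_F_circuit[OF circ c E row j] unfolding F_def p_def .
  then show ?thesis unfolding rfi_def Let_def r_def by (simp split: if_splits)
qed

lemma gamma_ineq_eq_rfi:
  assumes circ: "circular n m l k" and c: "is_circuit n l k E cs" and E: "E \<subseteq> arcs_F n m"
    and reverse_short: "otimes n cs \<noteq> {}"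
    and F: "F = {i \<in> {1..m}. RowF i \<in> set cs}" and p: "p = winding n k cs"
    and p_pos: "1 \<le> p" and p_le: "p \<le> int (card F) - 1" and ndvd: "\<not> p dvd int (card F)"
  shows "pstar n (circ_entry n l k) F = p"
    and "rfi_valid F p"
    and "\<forall>j\<in>{1..n}. fst (gamma_ineq n m l k cs (\<lambda>_. 1)) j = fst (rfi (circ_entry n l k) F p) j"
    and "snd (gamma_ineq n m l k cs (\<lambda>_. 1)) = snd (rfi (circ_entry n l k) F p)"
proof -
  have arcs: "set cs \<subseteq> arcs_F n m" using c E unfolding is_circuit_def by blast
  have card_F: "int (card F) = int (card {i \<in> {1..m}. RowF i \<in> set cs})" using F by simp
  have "F \<noteq> {}" using p_pos p_le by auto
  then obtain i where row: "RowF i \<in> set cs" using F by blast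
  show "pstar n (circ_entry n l k) F = p"
    using pstar_F_circuit[OF circ c E row reverse_short] F p by simp
  show "rfi_valid F p"
    unfolding rfi_valid_def using p_pos p_le ndvd by auto
  have gamma: "gamma_ineq n m l k cs (\<lambda>_. 1) = (\<lambda>j. r + of_bool (ShortR j \<in> set cs),
      r * \<lceil>real_of_int (int (card F)) / real_of_int p\<rceil>)"
    if "r = int (card F) - p * \<lfloor>real_of_int (int (card F)) / real_of_int p\<rfloor>" for r
    using gamma_ineq_uniform_F[OF arcs p _ card_F, of 1]
      p_pos ndvd that by simp
  show "\<forall>j\<in>{1..n}. fst (gamma_ineq n m l k cs (\<lambda>_. 1)) j = fst (rfi (circ_entry n l k) F p) j"
    using gamma rfi_F_circuit[OF circ c E row] F p by simp
  show "snd (gamma_ineq n m l k cs (\<lambda>_. 1)) = snd (rfi (circ_entry n l k) F p)"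
    using gamma unfolding rfi_def Let_def by simp
qed

theorem theorem6p2:
  fixes n m \<alpha> :: nat and l k :: "nat \<Rightarrow> nat" and cs :: "arc list" and s p :: int
  assumes circ: "circular n m l k"
    and alpha: "\<alpha> > 0"
    and circuit: "is_circuit n l k (arcs_F n m) cs"
    and s_def: "s = int (card {i \<in> {1..m}. RowF i \<in> set cs})"
    and p_def: "p = winding n k cs"
    and ndvd: "\<not> p dvd tval m cs (\<lambda>_. int \<alpha>)"
    and p_ge: "2 \<le> p"
    and p_le: "p \<le> tval m cs (\<lambda>_. int \<alpha>) - 1"
  shows "(let r = int \<alpha> * s - p * \<lfloor>real_of_int (int \<alpha> * s) / real_of_int p\<rfloor>
          in (\<forall>j\<in>{1..n}. fst (gamma_ineq n m l k cs (\<lambda>_. int \<alpha>)) j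
                          = (if j \<in> otimes n cs then r + 1 else r))
             \<and> snd (gamma_ineq n m l k cs (\<lambda>_. int \<alpha>))
                 = r * \<lceil>real_of_int (int \<alpha> * s) / real_of_int p\<rceil>)
       \<and> ((\<alpha> = 1 \<and> otimes n cs \<noteq> {}) \<longrightarrow>
          (let F = {i \<in> {1..m}. RowF i \<in> set cs}; a = circ_entry n l k;
               ps = pstar n a F
           in rfi_valid F ps
              \<and> (\<forall>j\<in>{1..n}. fst (gamma_ineq n m l k cs (\<lambda>_. 1)) j = fst (rfi a F ps) j)
              \<and> snd (gamma_ineq n m l k cs (\<lambda>_. 1)) = snd (rfi a F ps)))"
proof -
  have arcs: "set cs \<subseteq> arcs_F n m" using circuit unfolding is_circuit_def by blast
  have t: "tval m cs (\<lambda>_. int \<alpha>) = int \<alpha> * s" using tval_uniform_F[OF arcs] s_def by simp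
  have gamma: "gamma_ineq n m l k cs (\<lambda>_. int \<alpha>) = (\<lambda>j. r + of_bool (ShortR j \<in> set cs),
      r * \<lceil>real_of_int (int \<alpha> * s) / real_of_int p\<rceil>)"
    if "r = int \<alpha> * s - p * \<lfloor>real_of_int (int \<alpha> * s) / real_of_int p\<rfloor>" for r
    using gamma_ineq_uniform_F[OF arcs p_def _ s_def] p_ge ndvd t that by simp
  have otimes_iff: "j \<in> otimes n cs \<longleftrightarrow> ShortR j \<in> set cs" if "j \<in> {1..n}" for j
    using that unfolding otimes_def by simp
  have rfi_form: "pstar n (circ_entry n l k) F = p \<and> rfi_valid F p
      \<and> (\<forall>j\<in>{1..n}. fst (gamma_ineq n m l k cs (\<lambda>_. 1)) j = fst (rfi (circ_entry n l k) F p) j)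
      \<and> snd (gamma_ineq n m l k cs (\<lambda>_. 1)) = snd (rfi (circ_entry n l k) F p)"
    if "\<alpha> = 1" "otimes n cs \<noteq> {}" and F: "F = {i \<in> {1..m}. RowF i \<in> set cs}" for F
    using gamma_ineq_eq_rfi[OF circ circuit subset_refl that(2) F p_def] p_ge p_le ndvd t s_def F
      that(1) by simp
  show ?thesis
    unfolding Let_def using gamma[OF refl] otimes_iff rfi_form by auto
qed

end
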